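(* Let $c>0$, $m>0$, $q\in\mathbb{R}\setminus\{0\}$, and let $E=(E_1,\dots,E_n)$ with each $E_j\in C^1(\mathbb{R})$ and $\sup_{t}\sum_j|E_j^{(k)}(t)|<E_{0,k}<\infty$ for $k\in\{0,1\}$; put $b(t)=\int_0^tqE(s)\,ds$ and, for $\xi\in\mathbb{R}^n$, $Q(t,\xi)=(c^2(\xi+b(t))^2+(mc^2)^2)^{1/2}$, $Q'=\partial_tQ$. Consider the integral equations $$B(t,\xi)=\int_0^t\Big(Q(s,\xi)-Q(s,\xi)^{-1}Q'(s,\xi)\sin B(s,\xi)\cos B(s,\xi)\Big)ds,$$ $$D(t,\xi)=\int_0^t\Big(Q(s,\xi)+Q(s,\xi)^{-1}Q'(s,\xi)\sin D(s,\xi)\cos D(s,\xi)\Big)ds.$$ Then solutions $B(\cdot,\xi)$, $D(\cdot,\xi)$ of these equations are of class $C^2(\mathbb{R})$ in $t$ (as are $A(t,\xi)=\exp(-\int_0^tQ^{-1}Q'\sin^2B\,ds)$ and $C(t,\xi)=Q(0,\xi)^{-1}\exp(-\int_0^tQ^{-1}Q'\cos^2D\,ds)$), and the solutions $B$ and $D$ of these integral equations are unique. *)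

theory Defs
  imports "HOL-Analysis.Analysis"
begin

definition oint :: "real \<Rightarrow> real \<Rightarrow> (real \<Rightarrow> 'a::real_normed_vector) \<Rightarrow> 'a" where
  "oint a b f = (if a \<le> b then integral {a..b} f else - integral {b..a} f)"

definition has_oint :: "(real \<Rightarrow> 'a::real_normed_vector) \<Rightarrow> 'a \<Rightarrow> real \<Rightarrow> real \<Rightarrow> bool" where
  "has_oint f I a b = (if a \<le> b then (f has_integral I) {a..b} else (f has_integral - I) {b..a})"

definition C2_real :: "(real \<Rightarrow> real) \<Rightarrow> bool" where
  "C2_real f = (\<exists>f' f''. (\<forall>t. (f has_real_derivative f' t) (at t) \<and> (f' has_real_derivative f'' t) (at t))
                       \<and> continuous_on UNIV f'')"

definition bfun :: "real \<Rightarrow> (real \<Rightarrow> real ^ 'n) \<Rightarrow> real \<Rightarrow> real ^ 'n" where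
  "bfun q E t = oint 0 t (\<lambda>s. q *\<^sub>R E s)"

definition Qfun :: "real \<Rightarrow> real \<Rightarrow> real \<Rightarrow> (real \<Rightarrow> real ^ 'n) \<Rightarrow> real \<Rightarrow> real ^ 'n \<Rightarrow> real" where
  "Qfun c m q E t \<xi> = sqrt (c\<^sup>2 * (norm (\<xi> + bfun q E t))\<^sup>2 + (m * c\<^sup>2)\<^sup>2)"

definition Qdt :: "real \<Rightarrow> real \<Rightarrow> real \<Rightarrow> (real \<Rightarrow> real ^ 'n) \<Rightarrow> real \<Rightarrow> real ^ 'n \<Rightarrow> real" where
  "Qdt c m q E t \<xi> = deriv (\<lambda>s. Qfun c m q E s \<xi>) t"

definition solves_B :: "real \<Rightarrow> real \<Rightarrow> real \<Rightarrow> (real \<Rightarrow> real ^ 'n) \<Rightarrow> real ^ 'n \<Rightarrow> (real \<Rightarrow> real) \<Rightarrow> bool" where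
  "solves_B c m q E \<xi> B = (\<forall>t. has_oint (\<lambda>s. Qfun c m q E s \<xi>
        - inverse (Qfun c m q E s \<xi>) * Qdt c m q E s \<xi> * sin (B s) * cos (B s)) (B t) 0 t)"

definition solves_D :: "real \<Rightarrow> real \<Rightarrow> real \<Rightarrow> (real \<Rightarrow> real ^ 'n) \<Rightarrow> real ^ 'n \<Rightarrow> (real \<Rightarrow> real) \<Rightarrow> bool" where
  "solves_D c m q E \<xi> D = (\<forall>t. has_oint (\<lambda>s. Qfun c m q E s \<xi>
        + inverse (Qfun c m q E s \<xi>) * Qdt c m q E s \<xi> * sin (D s) * cos (D s)) (D t) 0 t)"

definition Afun :: "real \<Rightarrow> real \<Rightarrow> real \<Rightarrow> (real \<Rightarrow> real ^ 'n) \<Rightarrow> real ^ 'n \<Rightarrow> (real \<Rightarrow> real) \<Rightarrow> real \<Rightarrow> real" where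
  "Afun c m q E \<xi> B t = exp (- oint 0 t (\<lambda>s. inverse (Qfun c m q E s \<xi>) * Qdt c m q E s \<xi> * (sin (B s))\<^sup>2))"

definition Cfun :: "real \<Rightarrow> real \<Rightarrow> real \<Rightarrow> (real \<Rightarrow> real ^ 'n) \<Rightarrow> real ^ 'n \<Rightarrow> (real \<Rightarrow> real) \<Rightarrow> real \<Rightarrow> real" where
  "Cfun c m q E \<xi> D t = inverse (Qfun c m q E 0 \<xi>)
      * exp (- oint 0 t (\<lambda>s. inverse (Qfun c m q E s \<xi>) * Qdt c m q E s \<xi> * (cos (D s))\<^sup>2))"

end

theory Submission
  imports Defs
begin

text \<open>Both equations have the form \<open>B' = a + b sin B cos B\<close> with \<open>a = Q\<close> and \<open>b = \<mp>Q'/Q\<close>,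
where \<open>Q\<close> is positive and of class \<open>C\<^sup>2\<close>, so \<open>a\<close> and \<open>b\<close> are \<open>C\<^sup>1\<close>. A solution of the integral
equation is continuous, hence its integrand is continuous and the solution is \<open>C\<^sup>1\<close> with derivative
\<open>a + b sin B cos B\<close>; that derivative is again \<open>C\<^sup>1\<close>, so the solution is \<open>C\<^sup>2\<close>. \<open>A\<close> and \<open>C\<close> are
exponentials of integrals of \<open>C\<^sup>1\<close> functions. For uniqueness, \<open>x \<mapsto> sin x cos x\<close> is 1-Lipschitz, so
the difference \<open>w\<close> of two solutions satisfies \<open>|w'| \<le> L |w|\<close> on every compact interval and
\<open>w(0) = 0\<close>; Gronwall's argument (\<open>w\<^sup>2 exp (-2Lt)\<close> is non-increasing for \<open>t \<ge> 0\<close>, and symmetrically for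
\<open>t \<le> 0\<close>) forces \<open>w = 0\<close>.\<close>

lemma oint_eq_integral_diff:
  fixes f :: "real \<Rightarrow> 'a::banach"
  assumes "a' \<le> a" "a' \<le> t" "\<And>u v. f integrable_on {u..v}"
  shows "oint a t f = integral {a'..t} f - integral {a'..a} f"
proof (cases "a \<le> t")
  case True
  then have "integral {a'..a} f + integral {a..t} f = integral {a'..t} f"
    using Henstock_Kurzweil_Integration.integral_combine[where a=a' and c=a and b=t and f=f] assms by auto
  then show ?thesis using True by (simp add: oint_def algebra_simps)
next
  case False
  then have "integral {a'..t} f + integral {t..a} f = integral {a'..a} f"
    using Henstock_Kurzweil_Integration.integral_combine[where a=a' and c=t and b=a and f=f] assms by auto
  then show ?thesis using False by (simp add: oint_def algebra_simps)
qed

lemma oint_has_vector_derivative: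
  fixes f :: "real \<Rightarrow> 'a::banach"
  assumes f: "continuous_on UNIV f"
  shows "((\<lambda>t. oint a t f) has_vector_derivative f x) (at x)"
proof -
  define a' where "a' = min a x - 1"
  have int: "\<And>u v. f integrable_on {u..v}"
    by (rule integrable_continuous_real) (rule continuous_on_subset[OF f], auto)
  have "((\<lambda>u. integral {a'..u} f) has_vector_derivative f x) (at x within {a'..x+1})"
    by (rule integral_has_vector_derivative) (auto simp: a'_def intro: continuous_on_subset[OF f])
  then have "((\<lambda>u. integral {a'..u} f) has_vector_derivative f x) (at x within {a'<..<x+1})"
    by (rule has_vector_derivative_within_subset) auto
  moreover have "at x within {a'<..<x+1} = at x"
    by (rule at_within_open) (auto simp: a'_def)
  ultimately have "((\<lambda>u. integral {a'..u} f - integral {a'..a} f) has_vector_derivative f x) (at x)"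
    using has_vector_derivative_diff[OF _ has_vector_derivative_const] by fastforce
  then show ?thesis
    by (rule has_vector_derivative_transform_within_open[of _ _ _ "{a'<..}"])
       (use oint_eq_integral_diff[OF _ _ int, of a' a] in \<open>auto simp: a'_def\<close>)
qed

lemma oint_has_real_derivative:
  fixes f :: "real \<Rightarrow> real"
  assumes "continuous_on UNIV f"
  shows "((\<lambda>t. oint a t f) has_real_derivative f x) (at x)"
  using oint_has_vector_derivative[OF assms] by (simp add: has_real_derivative_iff_has_vector_derivative)

lemma has_oint_imp_oint_eq:
  fixes f :: "real \<Rightarrow> 'a::banach"
  assumes "has_oint f I a t"
  shows "oint a t f = I"
  using assms unfolding has_oint_def oint_def
  by (auto split: if_splits dest: integral_unique)

lemma has_oint_integrable_on:
  fixes f :: "real \<Rightarrow> 'a::banach"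
  assumes "\<And>t. has_oint f (B t) 0 t"
  shows "f integrable_on {u..v}"
proof -
  define T where "T = \<bar>u\<bar> + \<bar>v\<bar> + 1"
  have "f integrable_on {-T..0}" "f integrable_on {0..T}"
    using assms[of "-T"] assms[of T] by (auto simp: has_oint_def T_def split: if_splits)
  then have "f integrable_on {-T..T}"
    using Henstock_Kurzweil_Integration.integrable_combine[where a="-T" and c=0 and b=T and f=f]
    by (auto simp: T_def)
  then show ?thesis
    by (rule integrable_on_subinterval) (auto simp: T_def)
qed

lemma has_oint_imp_continuous_on:
  fixes f :: "real \<Rightarrow> 'a::banach"
  assumes B: "\<And>t. has_oint f (B t) 0 t"
  shows "continuous_on UNIV B"
proof -
  have "isCont B x" for x
  proof -
    define T where "T = \<bar>x\<bar> + 1"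
    have int: "\<And>u v. f integrable_on {u..v}"
      by (rule has_oint_integrable_on[OF B])
    have "continuous_on {-T..T} (\<lambda>t. integral {-T..t} f - integral {-T..0} f)"
      by (intro continuous_intros indefinite_integral_continuous_1 int)
    moreover have "integral {-T..t} f - integral {-T..0} f = B t" if "t \<in> {-T..T}" for t
      using that oint_eq_integral_diff[OF _ _ int, of "-T" 0 t] has_oint_imp_oint_eq[OF B]
      by (simp add: T_def)
    ultimately have "continuous_on {-T..T} B"
      by (rule continuous_on_eq)
    moreover have "x \<in> interior {-T..T}" by (auto simp: T_def)
    ultimately show ?thesis using continuous_on_interior by blast
  qed
  then show ?thesis by (simp add: continuous_at_imp_continuous_on)
qed

lemma C1_differentiable_on_UNIV_iff_real:
  fixes f :: "real \<Rightarrow> real"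
  shows "f C1_differentiable_on UNIV \<longleftrightarrow>
    (\<exists>f'. (\<forall>t. (f has_real_derivative f' t) (at t)) \<and> continuous_on UNIV f')"
  by (simp add: C1_differentiable_on_def has_real_derivative_iff_has_vector_derivative)

lemma C1_differentiable_on_compose_real:
  fixes f g g' :: "real \<Rightarrow> real"
  assumes f: "f C1_differentiable_on UNIV"
    and g: "\<And>x. x \<in> range f \<Longrightarrow> (g has_real_derivative g' x) (at x)"
    and g': "continuous_on (range f) g'"
  shows "(\<lambda>t. g (f t)) C1_differentiable_on UNIV"
proof -
  obtain f' where f': "\<And>t. (f has_real_derivative f' t) (at t)" "continuous_on UNIV f'"
    using f unfolding C1_differentiable_on_UNIV_iff_real by blast
  have "continuous_on UNIV (\<lambda>t. g' (f t))"
    using continuous_on_compose2[OF g' C1_differentiable_imp_continuous_on[OF f]] by auto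
  then show ?thesis
    unfolding C1_differentiable_on_UNIV_iff_real
    by (intro exI[of _ "\<lambda>t. g' (f t) * f' t"] conjI allI continuous_intros f' DERIV_chain2[OF g]) auto
qed

lemma C1_differentiable_on_sin:
  "f C1_differentiable_on UNIV \<Longrightarrow> (\<lambda>t. sin (f t :: real)) C1_differentiable_on UNIV"
  by (rule C1_differentiable_on_compose_real[where g=sin and g'=cos]) (auto intro: continuous_intros)

lemma C1_differentiable_on_cos:
  "f C1_differentiable_on UNIV \<Longrightarrow> (\<lambda>t. cos (f t :: real)) C1_differentiable_on UNIV"
  by (rule C1_differentiable_on_compose_real[where g=cos and g'="\<lambda>x. - sin x"])
     (auto intro!: DERIV_cos continuous_intros)

lemma C1_differentiable_on_exp:
  "f C1_differentiable_on UNIV \<Longrightarrow> (\<lambda>t. exp (f t :: real)) C1_differentiable_on UNIV"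
  by (rule C1_differentiable_on_compose_real[where g=exp and g'=exp]) (auto intro: continuous_intros)

lemma C1_differentiable_on_inverse:
  fixes f :: "real \<Rightarrow> real"
  assumes "f C1_differentiable_on UNIV" "\<And>t. f t \<noteq> 0"
  shows "(\<lambda>t. inverse (f t)) C1_differentiable_on UNIV"
  using assms
  by (intro C1_differentiable_on_compose_real[where g=inverse and g'="\<lambda>x. - (inverse x ^ 2)"])
     (auto intro!: continuous_intros DERIV_inverse[THEN DERIV_cong] simp: power2_eq_square)

lemma C1_differentiable_on_sqrt:
  fixes f :: "real \<Rightarrow> real"
  assumes "f C1_differentiable_on UNIV" "\<And>t. f t > 0"
  shows "(\<lambda>t. sqrt (f t)) C1_differentiable_on UNIV"
  using assms assms(2)[THEN dual_order.strict_implies_not_eq]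
  by (intro C1_differentiable_on_compose_real[where g=sqrt and g'="\<lambda>x. inverse (sqrt x) / 2"])
     (auto intro!: continuous_intros DERIV_real_sqrt)

lemma C1_differentiable_on_oint:
  fixes f :: "real \<Rightarrow> real"
  assumes "continuous_on UNIV f"
  shows "(\<lambda>t. oint a t f) C1_differentiable_on UNIV"
  unfolding C1_differentiable_on_UNIV_iff_real
  using oint_has_real_derivative[OF assms] assms by blast

lemma C2_realI:
  assumes "\<And>t. (f has_real_derivative f' t) (at t)" "f' C1_differentiable_on UNIV"
  shows "C2_real f"
  using assms unfolding C2_real_def C1_differentiable_on_UNIV_iff_real by blast

lemma C1_differentiable_on_sum:
  "finite I \<Longrightarrow> (\<And>i. i \<in> I \<Longrightarrow> f i C1_differentiable_on S) \<Longrightarrow>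
    (\<lambda>x. \<Sum>i\<in>I. f i x) C1_differentiable_on S"
  by (induction I rule: finite_induct) auto

lemma C2_real_exp_neg_oint:
  fixes h :: "real \<Rightarrow> real"
  assumes h: "h C1_differentiable_on UNIV"
  shows "C2_real (\<lambda>t. K * exp (- oint 0 t h))"
proof (rule C2_realI)
  have h_cont: "continuous_on UNIV h"
    using h by (rule C1_differentiable_imp_continuous_on)
  show "((\<lambda>t. K * exp (- oint 0 t h)) has_real_derivative K * (exp (- oint 0 t h) * - h t)) (at t)" for t
    by (auto intro!: derivative_eq_intros oint_has_real_derivative[OF h_cont])
  show "(\<lambda>t. K * (exp (- oint 0 t h) * - h t)) C1_differentiable_on UNIV"
    by (intro C1_differentiable_on_mult C1_differentiable_on_const C1_differentiable_on_minus
        C1_differentiable_on_exp C1_differentiable_on_oint h h_cont)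
qed

lemma abs_sin_diff_le:
  fixes x y :: real
  shows "\<bar>sin x - sin y\<bar> \<le> \<bar>x - y\<bar>"
proof -
  have "\<bar>sin x - sin y\<bar> = 2 * \<bar>sin ((x - y) / 2)\<bar> * \<bar>cos ((x + y) / 2)\<bar>"
    by (simp add: sin_diff_sin abs_mult)
  also have "\<dots> \<le> 2 * \<bar>(x - y) / 2\<bar> * 1"
    by (intro mult_mono abs_sin_x_le_abs_x) auto
  finally show ?thesis by simp
qed

lemma abs_sin_cos_diff_le:
  fixes x y :: real
  shows "\<bar>sin x * cos x - sin y * cos y\<bar> \<le> \<bar>x - y\<bar>"
  using abs_sin_diff_le[of "2 * x" "2 * y"] by (simp add: sin_double abs_mult)

lemma gronwall_zero_forward:
  fixes w w' :: "real \<Rightarrow> real"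
  assumes w: "\<And>s. (w has_real_derivative w' s) (at s)" and w0: "w 0 = 0" and "0 \<le> t"
    and bound: "\<And>s. 0 \<le> s \<Longrightarrow> s \<le> t \<Longrightarrow> \<bar>w' s\<bar> \<le> L * \<bar>w s\<bar>"
  shows "w t = 0"
proof -
  define u where "u s = (w s)\<^sup>2 * exp (- (2 * L * s))" for s
  have "u t \<le> u 0"
  proof (rule DERIV_nonpos_imp_nonincreasing[OF \<open>0 \<le> t\<close>])
    fix s assume s: "0 \<le> s" "s \<le> t"
    have "w s * w' s \<le> \<bar>w s\<bar> * \<bar>w' s\<bar>" by (metis abs_ge_self abs_mult)
    also have "\<dots> \<le> \<bar>w s\<bar> * (L * \<bar>w s\<bar>)" using bound s by (intro mult_left_mono) auto
    also have "\<dots> = L * (w s)\<^sup>2"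
      by (metis abs_mult_self_eq mult.left_commute power2_eq_square)
    finally have "2 * exp (- (2 * L * s)) * (w s * w' s - L * (w s)\<^sup>2) \<le> 0"
      by (intro mult_nonneg_nonpos) auto
    moreover have "(u has_real_derivative 2 * exp (- (2 * L * s)) * (w s * w' s - L * (w s)\<^sup>2)) (at s)"
      unfolding u_def by (auto intro!: derivative_eq_intros w simp: algebra_simps power2_eq_square)
    ultimately show "\<exists>y. DERIV u s :> y \<and> y \<le> 0" by blast
  qed
  then show ?thesis by (simp add: u_def w0 mult_le_0_iff)
qed

lemma gronwall_zero:
  fixes w w' :: "real \<Rightarrow> real"
  assumes w: "\<And>s. (w has_real_derivative w' s) (at s)" and w0: "w 0 = 0"
    and bound: "\<And>s. \<bar>s\<bar> \<le> \<bar>t\<bar> \<Longrightarrow> \<bar>w' s\<bar> \<le> L * \<bar>w s\<bar>"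
  shows "w t = 0"
proof (cases "0 \<le> t")
  case True
  then show ?thesis by (rule gronwall_zero_forward[OF w w0, where L=L]) (use bound in auto)
next
  case False
  have "((\<lambda>s. w (- s)) has_real_derivative - w' (- s)) (at s)" for s
    using w[of "- s"] by (simp add: DERIV_mirror)
  then have "w (- (- t)) = 0"
    by (rule gronwall_zero_forward[where L=L]) (use w0 False bound in auto)
  then show ?thesis by simp
qed

lemma sin_cos_integral_equation_has_real_derivative:
  fixes a b B :: "real \<Rightarrow> real"
  assumes "continuous_on UNIV a" "continuous_on UNIV b"
    and B: "\<And>t. has_oint (\<lambda>s. a s + b s * sin (B s) * cos (B s)) (B t) 0 t"
  shows "(B has_real_derivative a t + b t * sin (B t) * cos (B t)) (at t)"
proof -
  have "continuous_on UNIV (\<lambda>s. a s + b s * sin (B s) * cos (B s))"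
    using assms has_oint_imp_continuous_on[OF B] by (intro continuous_intros)
  moreover have "B = (\<lambda>t. oint 0 t (\<lambda>s. a s + b s * sin (B s) * cos (B s)))"
    using has_oint_imp_oint_eq[OF B] by auto
  ultimately show ?thesis using oint_has_real_derivative by metis
qed

lemma sin_cos_integral_equation_C1:
  fixes a b B :: "real \<Rightarrow> real"
  assumes "continuous_on UNIV a" "continuous_on UNIV b"
    and B: "\<And>t. has_oint (\<lambda>s. a s + b s * sin (B s) * cos (B s)) (B t) 0 t"
  shows "B C1_differentiable_on UNIV"
  unfolding C1_differentiable_on_UNIV_iff_real
  using sin_cos_integral_equation_has_real_derivative[OF assms] assms has_oint_imp_continuous_on[OF B]
  by (intro exI[of _ "\<lambda>t. a t + b t * sin (B t) * cos (B t)"] conjI allI continuous_intros) auto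

lemma sin_cos_integral_equation_C2:
  fixes a b B :: "real \<Rightarrow> real"
  assumes a: "a C1_differentiable_on UNIV" and b: "b C1_differentiable_on UNIV"
    and B: "\<And>t. has_oint (\<lambda>s. a s + b s * sin (B s) * cos (B s)) (B t) 0 t"
  shows "C2_real B"
proof -
  have cont: "continuous_on UNIV a" "continuous_on UNIV b"
    using a b by (auto intro: C1_differentiable_imp_continuous_on)
  have "B C1_differentiable_on UNIV"
    by (rule sin_cos_integral_equation_C1[OF cont B])
  then show ?thesis
    by (intro C2_realI[OF sin_cos_integral_equation_has_real_derivative[OF cont B]]
        C1_differentiable_on_add C1_differentiable_on_mult C1_differentiable_on_sin
        C1_differentiable_on_cos a b)
qed

lemma sin_cos_integral_equation_unique:
  fixes a b B1 B2 :: "real \<Rightarrow> real"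
  assumes a: "continuous_on UNIV a" and b: "continuous_on UNIV b"
    and B1: "\<And>t. has_oint (\<lambda>s. a s + b s * sin (B1 s) * cos (B1 s)) (B1 t) 0 t"
    and B2: "\<And>t. has_oint (\<lambda>s. a s + b s * sin (B2 s) * cos (B2 s)) (B2 t) 0 t"
  shows "B1 = B2"
proof
  fix t
  obtain L where L: "\<And>s. s \<in> {-\<bar>t\<bar>..\<bar>t\<bar>} \<Longrightarrow> norm (b s) \<le> L"
    using continuous_on_compact_bound[OF compact_Icc continuous_on_subset[OF b subset_UNIV]] by blast
  let ?sc = "\<lambda>s. sin (B1 s) * cos (B1 s) - sin (B2 s) * cos (B2 s)"
  have "B1 t - B2 t = 0"
  proof (rule gronwall_zero[where w="\<lambda>s. B1 s - B2 s" and w'="\<lambda>s. b s * ?sc s"])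
    show "((\<lambda>s. B1 s - B2 s) has_real_derivative b s * ?sc s) (at s)" for s
      using DERIV_diff[OF sin_cos_integral_equation_has_real_derivative[OF a b B1]
          sin_cos_integral_equation_has_real_derivative[OF a b B2]]
      by (simp add: algebra_simps)
    show "B1 0 - B2 0 = 0"
      using has_oint_imp_oint_eq[OF B1, of 0] has_oint_imp_oint_eq[OF B2, of 0] by (simp add: oint_def)
    show "\<bar>b s * ?sc s\<bar> \<le> L * \<bar>B1 s - B2 s\<bar>" if "\<bar>s\<bar> \<le> \<bar>t\<bar>" for s
    proof -
      have "\<bar>b s\<bar> \<le> L" using L[of s] that by (simp add: abs_le_iff)
      then show ?thesis
        unfolding abs_mult using abs_sin_cos_diff_le[of "B1 s" "B2 s"] by (intro mult_mono) auto
    qed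
  qed
  then show "B1 t = B2 t" by simp
qed

lemma Qfun_pos:
  assumes "c \<noteq> 0" "m \<noteq> 0"
  shows "0 < Qfun c m q E t \<xi>"
  unfolding Qfun_def using assms by (intro real_sqrt_gt_zero add_nonneg_pos) auto

lemma bfun_component_has_real_derivative:
  fixes E :: "real \<Rightarrow> real ^ 'n"
  assumes "continuous_on UNIV E"
  shows "((\<lambda>t. bfun q E t $ j) has_real_derivative q * E t $ j) (at t)"
proof -
  have "(bfun q E has_vector_derivative q *\<^sub>R E t) (at t)"
    unfolding bfun_def by (rule oint_has_vector_derivative) (intro continuous_intros assms)
  from bounded_linear.has_vector_derivative[OF bounded_linear_vec_nth this, of j]
  show ?thesis by (simp add: has_real_derivative_iff_has_vector_derivative)
qed

lemma power2_norm_vec_eq_sum: "(norm (x :: real ^ 'n))\<^sup>2 = (\<Sum>j\<in>UNIV. (x $ j)\<^sup>2)"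
  unfolding power2_norm_eq_inner inner_vec_def by (simp add: power2_eq_square)

lemma Qfun_Qdt_C1:
  fixes E :: "real \<Rightarrow> real ^ 'n"
  assumes E: "\<And>j. (\<lambda>t. E t $ j) C1_differentiable_on UNIV" and "c \<noteq> 0" "m \<noteq> 0"
  shows "(\<lambda>t. Qfun c m q E t \<xi>) C1_differentiable_on UNIV"
    and "(\<lambda>t. Qdt c m q E t \<xi>) C1_differentiable_on UNIV"
proof -
  have "continuous_on UNIV (\<lambda>t. \<chi> j. E t $ j)"
    by (intro continuous_on_vec_lambda C1_differentiable_imp_continuous_on E)
  define v where "v j t = \<xi> $ j + bfun q E t $ j" for j t
  have v': "(v j has_real_derivative q * E t $ j) (at t)" for j t
    unfolding v_def using \<open>continuous_on UNIV (\<lambda>t. \<chi> j. E t $ j)\<close>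
    by (auto intro!: derivative_eq_intros bfun_component_has_real_derivative)
  have v: "v j C1_differentiable_on UNIV" for j
    unfolding C1_differentiable_on_UNIV_iff_real
    by (intro exI[of _ "\<lambda>t. q * E t $ j"] conjI allI v' continuous_intros
        C1_differentiable_imp_continuous_on[OF E])
  define R where "R t = c\<^sup>2 * (\<Sum>j\<in>UNIV. (v j t)\<^sup>2) + (m * c\<^sup>2)\<^sup>2" for t
  define R' where "R' t = c\<^sup>2 * (\<Sum>j\<in>UNIV. 2 * v j t * (q * E t $ j))" for t
  have Q_eq: "Qfun c m q E t \<xi> = sqrt (R t)" for t
    unfolding Qfun_def R_def v_def by (simp add: power2_norm_vec_eq_sum)
  have R_pos: "0 < R t" for t
    using Qfun_pos[OF assms(2,3), of q E t \<xi>] by (simp add: Q_eq)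
  have "(R has_real_derivative R' t) (at t)" for t
    unfolding R_def R'_def
    by (auto intro!: derivative_eq_intros v' sum.cong simp: power2_eq_square mult_ac)
  then have "((\<lambda>t. Qfun c m q E t \<xi>) has_real_derivative inverse (sqrt (R t)) / 2 * R' t) (at t)" for t
    unfolding Q_eq by (rule DERIV_chain2[of sqrt _ R, OF DERIV_real_sqrt[OF R_pos]])
  then have Qdt_eq: "Qdt c m q E t \<xi> = inverse (sqrt (R t)) / 2 * R' t" for t
    unfolding Qdt_def by (rule DERIV_imp_deriv)
  have R: "R C1_differentiable_on UNIV"
    unfolding R_def power2_eq_square
    by (intro C1_differentiable_on_add C1_differentiable_on_mult C1_differentiable_on_const
        C1_differentiable_on_sum finite v)
  show "(\<lambda>t. Qfun c m q E t \<xi>) C1_differentiable_on UNIV"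
    unfolding Q_eq by (rule C1_differentiable_on_sqrt[OF R R_pos])
  have "R' C1_differentiable_on UNIV"
    unfolding R'_def by (intro C1_differentiable_on_mult C1_differentiable_on_const
        C1_differentiable_on_sum finite v E)
  then show "(\<lambda>t. Qdt c m q E t \<xi>) C1_differentiable_on UNIV"
    unfolding Qdt_eq divide_real_def using R_pos R_pos[THEN dual_order.strict_implies_not_eq]
    by (intro C1_differentiable_on_mult C1_differentiable_on_const C1_differentiable_on_inverse
        C1_differentiable_on_sqrt R) auto
qed

lemma Qdt_over_Qfun_C1:
  fixes E :: "real \<Rightarrow> real ^ 'n"
  assumes "\<And>j. (\<lambda>t. E t $ j) C1_differentiable_on UNIV" and "c \<noteq> 0" "m \<noteq> 0"
  shows "(\<lambda>t. inverse (Qfun c m q E t \<xi>) * Qdt c m q E t \<xi>) C1_differentiable_on UNIV"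
proof -
  have "Qfun c m q E t \<xi> \<noteq> 0" for t
    using Qfun_pos[OF assms(2,3)] by (metis less_irrefl)
  then show ?thesis
    by (intro C1_differentiable_on_mult C1_differentiable_on_inverse Qfun_Qdt_C1[OF assms])
qed

lemma solves_B_C2:
  fixes E :: "real \<Rightarrow> real ^ 'n"
  assumes "\<And>j. (\<lambda>t. E t $ j) C1_differentiable_on UNIV" and "c \<noteq> 0" "m \<noteq> 0"
    and "solves_B c m q E \<xi> B"
  shows "C2_real B" and "C2_real (Afun c m q E \<xi> B)"
proof -
  let ?P = "\<lambda>t. inverse (Qfun c m q E t \<xi>) * Qdt c m q E t \<xi>"
  note Q = Qfun_Qdt_C1(1)[OF assms(1-3)] and P = Qdt_over_Qfun_C1[OF assms(1-3)]
  have B: "\<And>t. has_oint (\<lambda>s. Qfun c m q E s \<xi> + - ?P s * sin (B s) * cos (B s)) (B t) 0 t"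
    using assms(4) by (simp add: solves_B_def)
  show "C2_real B"
    using sin_cos_integral_equation_C2[OF Q _ B] P by simp
  have "B C1_differentiable_on UNIV"
    using Q P by (intro sin_cos_integral_equation_C1[OF _ _ B] continuous_intros
        C1_differentiable_imp_continuous_on)
  moreover have "Afun c m q E \<xi> B = (\<lambda>t. 1 * exp (- oint 0 t (\<lambda>s. ?P s * (sin (B s) * sin (B s)))))"
    by (simp add: fun_eq_iff Afun_def power2_eq_square)
  ultimately show "C2_real (Afun c m q E \<xi> B)"
    by (simp only:) (intro C2_real_exp_neg_oint P C1_differentiable_on_mult C1_differentiable_on_sin)
qed

lemma solves_D_C2:
  fixes E :: "real \<Rightarrow> real ^ 'n"
  assumes "\<And>j. (\<lambda>t. E t $ j) C1_differentiable_on UNIV" and "c \<noteq> 0" "m \<noteq> 0"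
    and "solves_D c m q E \<xi> D"
  shows "C2_real D" and "C2_real (Cfun c m q E \<xi> D)"
proof -
  let ?P = "\<lambda>t. inverse (Qfun c m q E t \<xi>) * Qdt c m q E t \<xi>"
  note Q = Qfun_Qdt_C1(1)[OF assms(1-3)] and P = Qdt_over_Qfun_C1[OF assms(1-3)]
  have D: "\<And>t. has_oint (\<lambda>s. Qfun c m q E s \<xi> + ?P s * sin (D s) * cos (D s)) (D t) 0 t"
    using assms(4) by (simp add: solves_D_def)
  show "C2_real D"
    by (rule sin_cos_integral_equation_C2[OF Q P D])
  have "D C1_differentiable_on UNIV"
    using Q P by (intro sin_cos_integral_equation_C1[OF _ _ D] C1_differentiable_imp_continuous_on)
  moreover have "Cfun c m q E \<xi> D =
      (\<lambda>t. inverse (Qfun c m q E 0 \<xi>) * exp (- oint 0 t (\<lambda>s. ?P s * (cos (D s) * cos (D s)))))"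
    by (simp add: fun_eq_iff Cfun_def power2_eq_square)
  ultimately show "C2_real (Cfun c m q E \<xi> D)"
    by (simp only:) (intro C2_real_exp_neg_oint P C1_differentiable_on_mult C1_differentiable_on_cos)
qed

lemma solves_B_unique:
  fixes E :: "real \<Rightarrow> real ^ 'n"
  assumes "\<And>j. (\<lambda>t. E t $ j) C1_differentiable_on UNIV" and "c \<noteq> 0" "m \<noteq> 0"
    and "solves_B c m q E \<xi> B1" "solves_B c m q E \<xi> B2"
  shows "B1 = B2"
  using assms(4,5) Qfun_Qdt_C1(1)[OF assms(1-3)] Qdt_over_Qfun_C1[OF assms(1-3)]
  by (intro sin_cos_integral_equation_unique[where b="\<lambda>t. - (inverse (Qfun c m q E t \<xi>) * Qdt c m q E t \<xi>)"])
     (auto simp: solves_B_def intro!: continuous_intros C1_differentiable_imp_continuous_on)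

lemma solves_D_unique:
  fixes E :: "real \<Rightarrow> real ^ 'n"
  assumes "\<And>j. (\<lambda>t. E t $ j) C1_differentiable_on UNIV" and "c \<noteq> 0" "m \<noteq> 0"
    and "solves_D c m q E \<xi> D1" "solves_D c m q E \<xi> D2"
  shows "D1 = D2"
  using assms(4,5) Qfun_Qdt_C1(1)[OF assms(1-3)] Qdt_over_Qfun_C1[OF assms(1-3)]
  by (intro sin_cos_integral_equation_unique[where b="\<lambda>t. inverse (Qfun c m q E t \<xi>) * Qdt c m q E t \<xi>"])
     (auto simp: solves_D_def intro!: C1_differentiable_imp_continuous_on)

theorem lemma3p1:
  fixes c m q E00 E01 :: real and E :: "real \<Rightarrow> real ^ 'n"
  assumes "c > 0" and "m > 0" and "q \<noteq> 0"
    and C1: "\<forall>j. (\<lambda>t. E t $ j) C1_differentiable_on UNIV"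
    and bdd0: "bdd_above (range (\<lambda>t. \<Sum>j\<in>UNIV. \<bar>E t $ j\<bar>))"
    and sup0: "(SUP t. \<Sum>j\<in>UNIV. \<bar>E t $ j\<bar>) < E00"
    and bdd1: "bdd_above (range (\<lambda>t. \<Sum>j\<in>UNIV. \<bar>deriv (\<lambda>s. E s $ j) t\<bar>))"
    and sup1: "(SUP t. \<Sum>j\<in>UNIV. \<bar>deriv (\<lambda>s. E s $ j) t\<bar>) < E01"
  shows "\<forall>\<xi> :: real ^ 'n.
     (\<forall>B. solves_B c m q E \<xi> B \<longrightarrow> C2_real B \<and> C2_real (Afun c m q E \<xi> B))
   \<and> (\<forall>D. solves_D c m q E \<xi> D \<longrightarrow> C2_real D \<and> C2_real (Cfun c m q E \<xi> D))
   \<and> (\<forall>B1 B2. solves_B c m q E \<xi> B1 \<and> solves_B c m q E \<xi> B2 \<longrightarrow> B1 = B2)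
   \<and> (\<forall>D1 D2. solves_D c m q E \<xi> D1 \<and> solves_D c m q E \<xi> D2 \<longrightarrow> D1 = D2)"
proof -
  have "c \<noteq> 0" "m \<noteq> 0" using assms(1,2) by auto
  note hyps = C1[rule_format] this
  show ?thesis
    using solves_B_C2[OF hyps] solves_D_C2[OF hyps] solves_B_unique[OF hyps] solves_D_unique[OF hyps]
    by blast
qed

end
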